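(* Let $\langle\mathfrak B,\varphi,(Y,\mathbb S,\sigma)\rangle$ be a linear cocycle with finite-dimensional Banach fibre $\mathfrak B$. Then for every $y\in Y$ there exists a constant $L>0$ such that $|\varphi(t,u,y)|\le L|u|$ for all $t\in\mathbb T$, $t\ge0$, and all $u\in\mathfrak B^+_y:=\{u\in\mathfrak B:\ \sup_{t\ge0}|\varphi(t,u,y)|<+\infty\}$.
   Context: $\mathbb S$ is $\mathbb R$ or $\mathbb Z$, $\mathbb T$ is a sub-semigroup of $\mathbb S$ containing $\mathbb S_+=\{s\in\mathbb S: s\ge0\}$, and $(Y,\mathbb S,\sigma)$ is a dynamical system on a metric space $Y$. A linear cocycle over $(Y,\mathbb S,\sigma)$ with fibre the Banach space $(\mathfrak B,|\cdot|)$ is a continuous map $\varphi:\mathbb T\times\mathfrak B\times Y\to\mathfrak B$ with $\varphi(0,u,y)=u$, $\varphi(t+\tau,u,y)=\varphi(t,\varphi(\tau,u,y),\sigma(\tau,y))$ for all $t,\tau\in\mathbb T$, $u\in\mathfrak B$, $y\in Y$, and such that $\varphi(t,\cdot,y)$ is linear for every $(t,y)$. *)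

theory Defs
  imports "HOL-Analysis.Analysis"
begin

definition time_group :: "real set \<Rightarrow> bool" where
  "time_group S \<longleftrightarrow> S = UNIV \<or> S = \<int>"

definition time_semigroup :: "real set \<Rightarrow> real set \<Rightarrow> bool" where
  "time_semigroup S T \<longleftrightarrow> T \<subseteq> S \<and> (\<forall>t\<in>T. \<forall>\<tau>\<in>T. t + \<tau> \<in> T) \<and> {s\<in>S. 0 \<le> s} \<subseteq> T"

definition dynamical_system :: "real set \<Rightarrow> (real \<Rightarrow> 'y::metric_space \<Rightarrow> 'y) \<Rightarrow> bool" where
  "dynamical_system S \<sigma> \<longleftrightarrow>
     continuous_on (S \<times> UNIV) (\<lambda>(t, y). \<sigma> t y) \<and>
     (\<forall>y. \<sigma> 0 y = y) \<and>
     (\<forall>t\<in>S. \<forall>\<tau>\<in>S. \<forall>y. \<sigma> (t + \<tau>) y = \<sigma> t (\<sigma> \<tau> y))"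

definition linear_cocycle ::
  "real set \<Rightarrow> (real \<Rightarrow> 'y::metric_space \<Rightarrow> 'y) \<Rightarrow> (real \<Rightarrow> 'b::real_normed_vector \<Rightarrow> 'y \<Rightarrow> 'b) \<Rightarrow> bool" where
  "linear_cocycle T \<sigma> \<phi> \<longleftrightarrow>
     continuous_on (T \<times> UNIV \<times> UNIV) (\<lambda>(t, u, y). \<phi> t u y) \<and>
     (\<forall>u y. \<phi> 0 u y = u) \<and>
     (\<forall>t\<in>T. \<forall>\<tau>\<in>T. \<forall>u y. \<phi> (t + \<tau>) u y = \<phi> t (\<phi> \<tau> u y) (\<sigma> \<tau> y)) \<and>
     (\<forall>t\<in>T. \<forall>y. linear (\<lambda>u. \<phi> t u y))"

end

theory Submission
  imports Defs
begin

text \<open>Only linearity of each \<open>\<phi> t \<cdot> y\<close> and finite dimension matter: the maps \<open>u \<mapsto> \<phi> t u y\<close>,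
  \<open>t \<ge> 0\<close>, form a pointwise bounded family of linear maps on the set of vectors with bounded
  forward orbit, and in finite dimension pointwise boundedness is uniform. For the latter, write
  \<open>u\<close> in a basis of that set: each coordinate is bounded by \<open>K |u|\<close> (equivalence of norms,
  proved by induction on the basis via the positive distance of a vector to a closed span),
  so \<open>|\<phi> t u y| \<le> K |u| \<Sum> M\<^sub>b\<close> with \<open>M\<^sub>b\<close> the orbit bounds of the basis vectors.\<close>

lemma closed_span_of_coefficient_bound:
  fixes B :: "'a::real_normed_vector set"
  assumes "finite B" and "K > 0"
    and coeff: "\<And>c b. b \<in> B \<Longrightarrow> \<bar>c b\<bar> \<le> K * norm (\<Sum>x\<in>B. c x *\<^sub>R x)"
  shows "closed (span B)"
  unfolding closed_sequential_limits
proof (intro allI impI, elim conjE)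
  fix v a assume v_span: "\<forall>n. v n \<in> span B" and "v \<longlonglongrightarrow> a"
  have "\<forall>n. \<exists>c. v n = (\<Sum>x\<in>B. c x *\<^sub>R x)"
    using v_span span_finite[OF assms(1)] by auto
  then obtain C where "\<And>n. v n = (\<Sum>x\<in>B. C n x *\<^sub>R x)" by metis
  then have v: "v = (\<lambda>n. \<Sum>x\<in>B. C n x *\<^sub>R x)" by auto
  have "Cauchy v" using \<open>v \<longlonglongrightarrow> a\<close> by (intro convergent_Cauchy convergentI)
  have "convergent (\<lambda>n. C n b)" if "b \<in> B" for b
  proof -
    have "Cauchy (\<lambda>n. C n b)"
    proof (rule metric_CauchyI)
      fix e :: real assume "e > 0"
      with \<open>Cauchy v\<close> \<open>K > 0\<close> obtain M where M: "\<And>m n. m \<ge> M \<Longrightarrow> n \<ge> M \<Longrightarrow> dist (v m) (v n) < e / K"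
        unfolding Cauchy_def by (meson divide_pos_pos)
      show "\<exists>M. \<forall>m\<ge>M. \<forall>n\<ge>M. dist (C m b) (C n b) < e"
      proof (intro exI allI impI)
        fix m n assume "m \<ge> M" "n \<ge> M"
        have "dist (C m b) (C n b) \<le> K * dist (v m) (v n)"
          using coeff[OF that, of "\<lambda>x. C m x - C n x"]
          by (simp add: v dist_norm dist_real_def scaleR_diff_left sum_subtractf)
        also have "\<dots> < e"
          using M[OF \<open>m \<ge> M\<close> \<open>n \<ge> M\<close>] \<open>K > 0\<close> by (simp add: pos_less_divide_eq mult.commute)
        finally show "dist (C m b) (C n b) < e" .
      qed
    qed
    then show ?thesis by (simp add: Cauchy_convergent_iff)
  qed
  then obtain D where "\<And>b. b \<in> B \<Longrightarrow> (\<lambda>n. C n b) \<longlonglongrightarrow> D b"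
    unfolding convergent_def by metis
  then have "v \<longlonglongrightarrow> (\<Sum>x\<in>B. D x *\<^sub>R x)"
    unfolding v by (intro tendsto_sum tendsto_scaleR tendsto_const)
  with \<open>v \<longlonglongrightarrow> a\<close> have "a = (\<Sum>x\<in>B. D x *\<^sub>R x)" by (rule LIMSEQ_unique)
  then show "a \<in> span B" by (simp add: span_sum span_scale span_base)
qed

lemma abs_mult_infdist_span_le_norm:
  fixes a v :: "'a::real_normed_vector"
  assumes "v \<in> span B"
  shows "\<bar>r\<bar> * infdist a (span B) \<le> norm (r *\<^sub>R a + v)"
proof (cases "r = 0")
  case True
  then show ?thesis by simp
next
  case False
  have "- v /\<^sub>R r \<in> span B" using assms by (simp add: span_scale span_neg)
  then have "infdist a (span B) \<le> norm (a - - v /\<^sub>R r)" by (metis infdist_le dist_norm)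
  then have "\<bar>r\<bar> * infdist a (span B) \<le> norm (r *\<^sub>R (a - - v /\<^sub>R r))"
    by (simp add: mult_left_mono)
  also have "r *\<^sub>R (a - - v /\<^sub>R r) = r *\<^sub>R a + v" using False by (simp add: algebra_simps)
  finally show ?thesis .
qed

lemma coefficient_bound_insert:
  fixes B :: "'a::real_normed_vector set"
  assumes "finite B" "a \<notin> B" "a \<notin> span B" "K > 0"
    and K: "\<And>c b. b \<in> B \<Longrightarrow> \<bar>c b\<bar> \<le> K * norm (\<Sum>x\<in>B. c x *\<^sub>R x)"
  shows "\<exists>K'>0. \<forall>c. \<forall>b\<in>insert a B. \<bar>c b\<bar> \<le> K' * norm (\<Sum>x\<in>insert a B. c x *\<^sub>R x)"
proof -
  define \<delta> where "\<delta> = infdist a (span B)"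
  have "\<delta> > 0"
    unfolding \<delta>_def using closed_span_of_coefficient_bound[OF \<open>finite B\<close> \<open>K > 0\<close> K] \<open>a \<notin> span B\<close>
    by (intro infdist_pos_not_in_closed) (auto intro: span_zero)
  define K' where "K' = 1 / \<delta> + K * (1 + norm a / \<delta>)"
  have "0 \<le> K * (1 + norm a / \<delta>)" using \<open>K > 0\<close> \<open>\<delta> > 0\<close> by simp
  then have "K' > 0" using \<open>\<delta> > 0\<close> by (simp add: K'_def add_pos_nonneg)
  show ?thesis
  proof (intro exI[of _ K'] conjI allI ballI \<open>K' > 0\<close>)
    fix c b assume b: "b \<in> insert a B"
    define v where "v = (\<Sum>x\<in>B. c x *\<^sub>R x)"
    define s where "s = (\<Sum>x\<in>insert a B. c x *\<^sub>R x)"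
    have s: "s = c a *\<^sub>R a + v" using assms(1,2) by (simp add: s_def v_def)
    have "v \<in> span B" unfolding v_def by (simp add: span_sum span_scale span_base)
    then have "\<bar>c a\<bar> * \<delta> \<le> norm s"
      unfolding s \<delta>_def by (rule abs_mult_infdist_span_le_norm)
    then have ca: "\<bar>c a\<bar> \<le> norm s / \<delta>" using \<open>\<delta> > 0\<close> by (simp add: field_simps)
    have "norm v \<le> norm s + \<bar>c a\<bar> * norm a"
      using s norm_triangle_ineq4[of s "c a *\<^sub>R a"] by simp
    also have "\<dots> \<le> norm s + norm s / \<delta> * norm a"
      using mult_right_mono[OF ca norm_ge_zero[of a]] by simp
    finally have v_le: "norm v \<le> (1 + norm a / \<delta>) * norm s" by (simp add: algebra_simps)
    show "\<bar>c b\<bar> \<le> K' * norm s"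
    proof (cases "b = a")
      case True
      have "norm s / \<delta> \<le> K' * norm s"
        using \<open>0 \<le> K * (1 + norm a / \<delta>)\<close> by (simp add: K'_def distrib_right)
      with ca True show ?thesis by simp
    next
      case False
      with b have "\<bar>c b\<bar> \<le> K * norm v" using K by (simp add: v_def)
      also have "\<dots> \<le> K * (1 + norm a / \<delta>) * norm s"
        using v_le \<open>K > 0\<close> by (simp add: mult_left_mono)
      also have "\<dots> \<le> K' * norm s"
        using \<open>\<delta> > 0\<close> by (intro mult_right_mono) (auto simp: K'_def)
      finally show ?thesis .
    qed
  qed
qed

lemma independent_coefficient_bound:
  fixes B :: "'a::real_normed_vector set"
  assumes "finite B" "independent B"
  shows "\<exists>K>0. \<forall>c. \<forall>b\<in>B. \<bar>c b\<bar> \<le> K * norm (\<Sum>x\<in>B. c x *\<^sub>R x)"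
  using assms
proof (induction B rule: finite_induct)
  case empty
  then show ?case by (intro exI[of _ 1]) auto
next
  case (insert a B)
  then have "independent B" and "a \<notin> span B"
    by (auto simp: independent_insert)
  with insert.IH obtain K where "K > 0"
    and "\<And>c b. b \<in> B \<Longrightarrow> \<bar>c b\<bar> \<le> K * norm (\<Sum>x\<in>B. c x *\<^sub>R x)" by blast
  with insert.hyps \<open>a \<notin> span B\<close> show ?case by (intro coefficient_bound_insert) auto
qed

lemma uniform_boundedness_on_span:
  fixes f :: "'i \<Rightarrow> 'a::real_normed_vector \<Rightarrow> 'b::real_normed_vector"
  assumes "finite B" "independent B"
    and linear: "\<And>i. i \<in> I \<Longrightarrow> linear (f i)"
    and bounded: "\<And>b. b \<in> B \<Longrightarrow> \<exists>M. \<forall>i\<in>I. norm (f i b) \<le> M"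
  shows "\<exists>L>0. \<forall>i\<in>I. \<forall>u\<in>span B. norm (f i u) \<le> L * norm u"
proof -
  obtain K where "K > 0" and K: "\<And>c b. b \<in> B \<Longrightarrow> \<bar>c b\<bar> \<le> K * norm (\<Sum>x\<in>B. c x *\<^sub>R x)"
    using independent_coefficient_bound[OF assms(1,2)] by blast
  obtain M where M: "\<And>b i. b \<in> B \<Longrightarrow> i \<in> I \<Longrightarrow> norm (f i b) \<le> M b"
    using bounded by metis
  define L where "L = 1 + K * (\<Sum>b\<in>B. \<bar>M b\<bar>)"
  have "0 \<le> K * (\<Sum>b\<in>B. \<bar>M b\<bar>)" using \<open>K > 0\<close> by (simp add: sum_nonneg)
  then have "L > 0" by (simp add: L_def)
  show ?thesis
  proof (intro exI[of _ L] conjI ballI \<open>L > 0\<close>)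
    fix i u assume "i \<in> I" "u \<in> span B"
    then obtain c where u: "u = (\<Sum>b\<in>B. c b *\<^sub>R b)"
      using span_finite[OF assms(1)] by auto
    have "f i u = (\<Sum>b\<in>B. c b *\<^sub>R f i b)"
      unfolding u using linear[OF \<open>i \<in> I\<close>] by (simp add: linear_sum linear_scale)
    then have "norm (f i u) \<le> (\<Sum>b\<in>B. \<bar>c b\<bar> * norm (f i b))"
      using norm_sum[of "\<lambda>b. c b *\<^sub>R f i b" B] by simp
    also have "\<dots> \<le> (\<Sum>b\<in>B. (K * norm u) * \<bar>M b\<bar>)"
    proof (rule sum_mono)
      fix b assume "b \<in> B"
      have "\<bar>c b\<bar> \<le> K * norm u" using K[OF \<open>b \<in> B\<close>] by (simp add: u)
      moreover have "norm (f i b) \<le> \<bar>M b\<bar>" using M[OF \<open>b \<in> B\<close> \<open>i \<in> I\<close>] by linarith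
      ultimately show "\<bar>c b\<bar> * norm (f i b) \<le> (K * norm u) * \<bar>M b\<bar>"
        using \<open>K > 0\<close> by (intro mult_mono) simp_all
    qed
    also have "\<dots> = K * (\<Sum>b\<in>B. \<bar>M b\<bar>) * norm u" by (simp add: sum_distrib_left[symmetric])
    also have "\<dots> \<le> L * norm u" by (intro mult_right_mono) (auto simp: L_def)
    finally show "norm (f i u) \<le> L * norm u" .
  qed
qed

lemma uniform_boundedness_finite_dim:
  fixes f :: "'i \<Rightarrow> 'a::real_normed_vector \<Rightarrow> 'b::real_normed_vector" and A :: "'a set"
  assumes "finite A" "span A = UNIV"
    and "\<And>i. i \<in> I \<Longrightarrow> linear (f i)"
    and bounded: "\<And>u. u \<in> W \<Longrightarrow> \<exists>M. \<forall>i\<in>I. norm (f i u) \<le> M"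
  shows "\<exists>L>0. \<forall>i\<in>I. \<forall>u\<in>W. norm (f i u) \<le> L * norm u"
proof -
  obtain B where "B \<subseteq> W" "independent B" "W \<subseteq> span B"
    by (rule basis_exists[of W])
  have "finite B"
    using independent_span_bound[OF \<open>finite A\<close> \<open>independent B\<close>] \<open>span A = UNIV\<close> by auto
  have "\<exists>L>0. \<forall>i\<in>I. \<forall>u\<in>span B. norm (f i u) \<le> L * norm u"
    using \<open>finite B\<close> \<open>independent B\<close> assms(3) bounded \<open>B \<subseteq> W\<close>
    by (intro uniform_boundedness_on_span) auto
  with \<open>W \<subseteq> span B\<close> show ?thesis by blast
qed

theorem mainTheorem9:
  fixes S T :: "real set"
    and \<sigma> :: "real \<Rightarrow> 'y::metric_space \<Rightarrow> 'y"
    and \<phi> :: "real \<Rightarrow> 'b::banach \<Rightarrow> 'y \<Rightarrow> 'b"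
  assumes "time_group S"
    and "time_semigroup S T"
    and "dynamical_system S \<sigma>"
    and "linear_cocycle T \<sigma> \<phi>"
    and "\<exists>A::'b set. finite A \<and> span A = UNIV"
  shows "\<forall>y. \<exists>L>0. \<forall>t\<in>T. 0 \<le> t \<longrightarrow>
           (\<forall>u. (\<exists>M. \<forall>s\<in>T. 0 \<le> s \<longrightarrow> norm (\<phi> s u y) \<le> M) \<longrightarrow>
                norm (\<phi> t u y) \<le> L * norm u)"
proof
  fix y
  define W where "W = {u. \<exists>M. \<forall>s\<in>T. 0 \<le> s \<longrightarrow> norm (\<phi> s u y) \<le> M}"
  obtain A :: "'b set" where "finite A" "span A = UNIV" using assms(5) by blast
  moreover have "\<And>t. t \<in> {t\<in>T. 0 \<le> t} \<Longrightarrow> linear (\<lambda>u. \<phi> t u y)"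
    using assms(4) by (simp add: linear_cocycle_def)
  moreover have "\<And>u. u \<in> W \<Longrightarrow> \<exists>M. \<forall>t\<in>{t\<in>T. 0 \<le> t}. norm (\<phi> t u y) \<le> M"
    by (auto simp: W_def)
  ultimately have "\<exists>L>0. \<forall>t\<in>{t\<in>T. 0 \<le> t}. \<forall>u\<in>W. norm (\<phi> t u y) \<le> L * norm u"
    by (rule uniform_boundedness_finite_dim)
  then show "\<exists>L>0. \<forall>t\<in>T. 0 \<le> t \<longrightarrow>
      (\<forall>u. (\<exists>M. \<forall>s\<in>T. 0 \<le> s \<longrightarrow> norm (\<phi> s u y) \<le> M) \<longrightarrow> norm (\<phi> t u y) \<le> L * norm u)"
    unfolding W_def by blast
qed

end
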